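(* Let $X=(X_1,\ldots,X_n)$ be a real random vector with finite support, $Q=[q_{ij}]\in\mathbb{R}^{m\times n}$ and $\tilde X=QX\in\mathbb{R}^m$. For each $d\ge1$ let $L_d$ be a partition lattice of $[d]$ with Möbius function $\mathfrak{m}_d$, and define the $n\times\cdots\times n$ tensor $$\mathcal{L}^{(d)}_{i_1\cdots i_d}=\sum_{\pi\in L_d}\mathfrak{m}_d(\pi,[d])\prod_{B\in\pi}\mathbb{E}\Big[\prod_{b\in B}X_{i_b}\Big],\qquad (i_1,\ldots,i_d)\in[n]^d,$$ and analogously the $m\times\cdots\times m$ tensor $\tilde{\mathcal{L}}^{(d)}$ from $\tilde X$. Then for every $d\ge1$ and $i_1,\ldots,i_d\in[m]$, $$\tilde{\mathcal{L}}^{(d)}_{i_1\cdots i_d}=\sum_{j_1=1}^n\cdots\sum_{j_d=1}^n q_{i_1j_1}\cdots q_{i_dj_d}\,\mathcal{L}^{(d)}_{j_1\cdots j_d}.$$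
   Context: A partition lattice of $[d]$ is a subset of the set of set partitions of $[d]$ containing the one-block partition $[d]$ and the finest partition $1|\cdots|d$ which is a lattice under the refinement order. The Möbius function of a finite poset is given by $\mathfrak{m}(\pi,\pi)=1$, $\mathfrak{m}(\pi,\nu)=-\sum_{\pi\le\delta<\nu}\mathfrak{m}(\pi,\delta)$ for $\pi<\nu$, $0$ otherwise. *)

theory Defs
  imports "HOL-Probability.Probability" "HOL-Library.Disjoint_Sets"
begin

definition set_partitions :: "nat \<Rightarrow> nat set set set" where
  "set_partitions d = {P. partition_on {1..d} P}"

definition refines :: "nat set set \<Rightarrow> nat set set \<Rightarrow> bool" where
  "refines P R \<longleftrightarrow> (\<forall>B\<in>P. \<exists>C\<in>R. B \<subseteq> C)"

definition is_lub_in :: "nat set set set \<Rightarrow> nat set set \<Rightarrow> nat set set \<Rightarrow> nat set set \<Rightarrow> bool" where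
  "is_lub_in L a b c \<longleftrightarrow> c \<in> L \<and> refines a c \<and> refines b c \<and>
     (\<forall>z\<in>L. refines a z \<and> refines b z \<longrightarrow> refines c z)"

definition is_glb_in :: "nat set set set \<Rightarrow> nat set set \<Rightarrow> nat set set \<Rightarrow> nat set set \<Rightarrow> bool" where
  "is_glb_in L a b c \<longleftrightarrow> c \<in> L \<and> refines c a \<and> refines c b \<and>
     (\<forall>z\<in>L. refines z a \<and> refines z b \<longrightarrow> refines z c)"

definition partition_lattice :: "nat \<Rightarrow> nat set set set \<Rightarrow> bool" where
  "partition_lattice d L \<longleftrightarrow>
     L \<subseteq> set_partitions d \<and>
     {{1..d}} \<in> L \<and>
     (\<lambda>i. {i}) ` {1..d} \<in> L \<and>
     (\<forall>a\<in>L. \<forall>b\<in>L. (\<exists>c. is_lub_in L a b c) \<and> (\<exists>c. is_glb_in L a b c))"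

text \<open>Recursion depth is bounded by the length of a strict chain, so fuel card L + 1 suffices.\<close>
fun mobius_aux :: "nat \<Rightarrow> nat set set set \<Rightarrow> nat set set \<Rightarrow> nat set set \<Rightarrow> real" where
  "mobius_aux 0 L p v = 0"
| "mobius_aux (Suc k) L p v =
     (if p = v then 1
      else if refines p v then
        - (\<Sum>d\<in>{d\<in>L. refines p d \<and> refines d v \<and> d \<noteq> v}. mobius_aux k L p d)
      else 0)"

definition mobius :: "nat set set set \<Rightarrow> nat set set \<Rightarrow> nat set set \<Rightarrow> real" where
  "mobius L p v = mobius_aux (Suc (card L)) L p v"

definition cumulant_tensor ::
  "(nat \<Rightarrow> nat set set set) \<Rightarrow> (nat \<Rightarrow> real) pmf \<Rightarrow> nat \<Rightarrow> (nat \<Rightarrow> nat) \<Rightarrow> real" where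
  "cumulant_tensor L p d i =
     (\<Sum>\<pi>\<in>L d. mobius (L d) \<pi> {{1..d}} *
        (\<Prod>B\<in>\<pi>. measure_pmf.expectation p (\<lambda>x. \<Prod>b\<in>B. x (i b))))"

definition lin_transform :: "nat \<Rightarrow> (nat \<Rightarrow> nat \<Rightarrow> real) \<Rightarrow> (nat \<Rightarrow> real) \<Rightarrow> (nat \<Rightarrow> real)" where
  "lin_transform n Q x = (\<lambda>i. \<Sum>j=1..n. Q i j * x j)"

end

theory Submission
  imports Defs
begin

(*
  The Moebius coefficients and the lattice structure of L d play no role: the
  transformation rule holds for every single partition pi of [d] separately, for the
  product of block moments prod_{B in pi} E[prod_{b in B} X~_{i_b}], and then for any
  linear combination of such products over partitions, in particular the cumulant tensor.

  For one partition pi the argument is: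
   (1) each block moment of X~ = QX is, by multilinearity of the product and linearity
       of expectation, a sum over index maps g : B -> [n] (lemma moment_lin_transform);
   (2) a product over the blocks of pi of sums over maps B -> [n] is a single sum over
       maps [d] -> [n], since such maps correspond bijectively to families of maps on
       the blocks (lemmas restrict_to_blocks_bij, prod_sum_over_blocks);
   (3) the products of Q-entries over the blocks recombine into a product over [d]
       (lemma prod_over_blocks).
  The theorem then follows by distributing the Moebius-weighted sum over pi.
*)

definition partition_block :: "'a set set \<Rightarrow> 'a \<Rightarrow> 'a set" where
  "partition_block P b = (THE B. B \<in> P \<and> b \<in> B)"

lemma partition_block_unique:
  assumes P: "partition_on D P" and b: "b \<in> D"
  shows "\<exists>!B. B \<in> P \<and> b \<in> B"
proof -
  obtain B where "B \<in> P" "b \<in> B"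
    using partition_onD1[OF P] b by blast
  moreover have "C = B" if "C \<in> P" "b \<in> C" for C
    using disjointD[OF partition_onD2[OF P]] \<open>B \<in> P\<close> \<open>b \<in> B\<close> that by blast
  ultimately show ?thesis by blast
qed

lemma partition_block_mem:
  assumes "partition_on D P" and "b \<in> D"
  shows "partition_block P b \<in> P" and "b \<in> partition_block P b"
  using theI'[OF partition_block_unique[OF assms]] unfolding partition_block_def by auto

lemma partition_block_eq:
  assumes P: "partition_on D P" and "B \<in> P" and "b \<in> B"
  shows "partition_block P b = B"
proof -
  have "b \<in> D" using partition_onD1[OF P] assms(2,3) by blast
  then show ?thesis
    unfolding partition_block_def
    using the1_equality[OF partition_block_unique[OF P]] assms(2,3) by blast
qed

lemma finite_partition_block:
  assumes "partition_on D P" and "finite D" and "B \<in> P"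
  shows "finite B"
  using assms partition_onD1 by (metis Union_upper finite_subset)

lemma restrict_glue_block:
  assumes P: "partition_on D P" and G: "G \<in> PiE P (\<lambda>B. PiE B (\<lambda>_. N))" and B: "B \<in> P"
  shows "restrict (\<lambda>b\<in>D. G (partition_block P b) b) B = G B"
proof (rule ext)
  fix b
  show "restrict (\<lambda>b\<in>D. G (partition_block P b) b) B b = G B b"
  proof (cases "b \<in> B")
    case True
    then have "b \<in> D" and "partition_block P b = B"
      using partition_onD1[OF P] B partition_block_eq[OF P B] by auto
    then show ?thesis using True by simp
  next
    case False
    then show ?thesis using PiE_arb[OF PiE_mem[OF G B] False] by simp
  qed
qed

lemma restrict_to_blocks_bij:
  assumes P: "partition_on D P"
  shows "bij_betw (\<lambda>j. \<lambda>B\<in>P. restrict j B)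
           (PiE D (\<lambda>_. N)) (PiE P (\<lambda>B. PiE B (\<lambda>_. N)))"
proof (rule bij_betw_byWitness[where f' = "\<lambda>G. \<lambda>b\<in>D. G (partition_block P b) b"])
  show "\<forall>j\<in>PiE D (\<lambda>_. N). (\<lambda>b\<in>D. (\<lambda>B\<in>P. restrict j B) (partition_block P b) b) = j"
  proof (intro ballI, rule ext)
    fix j b assume j: "j \<in> PiE D (\<lambda>_. N)"
    show "(\<lambda>b\<in>D. (\<lambda>B\<in>P. restrict j B) (partition_block P b) b) b = j b"
    proof (cases "b \<in> D")
      case True
      then show ?thesis using partition_block_mem[OF P True] by simp
    next
      case False
      then show ?thesis using PiE_arb[OF j False] by simp
    qed
  qed
  show "\<forall>G\<in>PiE P (\<lambda>B. PiE B (\<lambda>_. N)).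
          (\<lambda>B\<in>P. restrict (\<lambda>b\<in>D. G (partition_block P b) b) B) = G"
  proof (intro ballI, rule ext)
    fix G B assume G: "G \<in> PiE P (\<lambda>B. PiE B (\<lambda>_. N))"
    show "(\<lambda>B\<in>P. restrict (\<lambda>b\<in>D. G (partition_block P b) b) B) B = G B"
    proof (cases "B \<in> P")
      case True
      then show ?thesis using restrict_glue_block[OF P G True] by simp
    next
      case False
      then show ?thesis using PiE_arb[OF G False] by simp
    qed
  qed
  show "(\<lambda>j. \<lambda>B\<in>P. restrict j B) ` PiE D (\<lambda>_. N) \<subseteq> PiE P (\<lambda>B. PiE B (\<lambda>_. N))"
    using partition_onD1[OF P] by (fastforce simp: PiE_iff)
  show "(\<lambda>G. \<lambda>b\<in>D. G (partition_block P b) b) ` PiE P (\<lambda>B. PiE B (\<lambda>_. N))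
          \<subseteq> PiE D (\<lambda>_. N)"
    using partition_block_mem[OF P] by (auto simp: PiE_iff)
qed

lemma prod_sum_over_blocks:
  fixes c :: "'a set \<Rightarrow> ('a \<Rightarrow> 'b) \<Rightarrow> 'c::comm_semiring_1"
  assumes P: "partition_on D P" and "finite D" and "finite N"
  shows "(\<Prod>B\<in>P. \<Sum>g\<in>PiE B (\<lambda>_. N). c B g) =
         (\<Sum>j\<in>PiE D (\<lambda>_. N). \<Prod>B\<in>P. c B (restrict j B))"
proof -
  have "finite B" if "B \<in> P" for B
    using finite_partition_block[OF P assms(2) that] .
  then have "(\<Prod>B\<in>P. \<Sum>g\<in>PiE B (\<lambda>_. N). c B g) =
             (\<Sum>G\<in>PiE P (\<lambda>B. PiE B (\<lambda>_. N)). \<Prod>B\<in>P. c B (G B))"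
    using finite_elements[OF assms(2) P] assms(3) by (intro prod_sum_PiE) (auto intro: finite_PiE)
  also have "\<dots> = (\<Sum>j\<in>PiE D (\<lambda>_. N). \<Prod>B\<in>P. c B (restrict j B))"
    using sum.reindex_bij_betw[OF restrict_to_blocks_bij[OF P],
            of "\<lambda>G. \<Prod>B\<in>P. c B (G B)"] by simp
  finally show ?thesis .
qed

lemma prod_over_blocks:
  fixes f :: "'a \<Rightarrow> 'c::comm_monoid_mult"
  assumes P: "partition_on D P" and "finite D"
  shows "(\<Prod>B\<in>P. \<Prod>b\<in>B. f b) = (\<Prod>b\<in>D. f b)"
proof -
  have "finite B" if "B \<in> P" for B
    using finite_partition_block[OF P assms(2) that] .
  then have "(\<Prod>b\<in>\<Union>P. f b) = (\<Prod>B\<in>P. \<Prod>b\<in>B. f b)"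
    using finite_elements[OF assms(2) P] disjointD[OF partition_onD2[OF P]]
    by (subst prod.Union_disjoint) auto
  then show ?thesis using partition_onD1[OF P] by simp
qed

lemma moment_lin_transform:
  fixes p :: "(nat \<Rightarrow> real) pmf"
  assumes fin: "finite (set_pmf p)" and "finite B"
  shows "measure_pmf.expectation (map_pmf (lin_transform n Q) p) (\<lambda>x. \<Prod>b\<in>B. x (i b)) =
    (\<Sum>g\<in>PiE B (\<lambda>_. {1..n}). (\<Prod>b\<in>B. Q (i b) (g b)) *
        measure_pmf.expectation p (\<lambda>x. \<Prod>b\<in>B. x (g b)))"
proof -
  have expand: "(\<Prod>b\<in>B. \<Sum>k=1..n. Q (i b) k * x k) =
      (\<Sum>g\<in>PiE B (\<lambda>_. {1..n}). (\<Prod>b\<in>B. Q (i b) (g b)) * (\<Prod>b\<in>B. x (g b)))" for x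
    using assms(2) by (subst prod_sum_PiE) (auto simp: prod.distrib)
  have "measure_pmf.expectation (map_pmf (lin_transform n Q) p) (\<lambda>x. \<Prod>b\<in>B. x (i b)) =
      measure_pmf.expectation p (\<lambda>x. \<Prod>b\<in>B. lin_transform n Q x (i b))"
    by simp
  also have "\<dots> = measure_pmf.expectation p
        (\<lambda>x. \<Sum>g\<in>PiE B (\<lambda>_. {1..n}). (\<Prod>b\<in>B. Q (i b) (g b)) * (\<Prod>b\<in>B. x (g b)))"
    by (simp only: lin_transform_def expand)
  also have "\<dots> = (\<Sum>g\<in>PiE B (\<lambda>_. {1..n}). measure_pmf.expectation p
                     (\<lambda>x. (\<Prod>b\<in>B. Q (i b) (g b)) * (\<Prod>b\<in>B. x (g b))))"
    by (intro Bochner_Integration.integral_sum integrable_measure_pmf_finite[OF fin])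
  finally show ?thesis by simp
qed

lemma block_moments_lin_transform:
  fixes p :: "(nat \<Rightarrow> real) pmf"
  assumes fin: "finite (set_pmf p)" and P: "partition_on D \<pi>" and "finite D"
  shows "(\<Prod>B\<in>\<pi>. measure_pmf.expectation (map_pmf (lin_transform n Q) p)
                      (\<lambda>x. \<Prod>b\<in>B. x (i b))) =
    (\<Sum>j\<in>PiE D (\<lambda>_. {1..n}). (\<Prod>b\<in>D. Q (i b) (j b)) *
        (\<Prod>B\<in>\<pi>. measure_pmf.expectation p (\<lambda>x. \<Prod>b\<in>B. x (j b))))"
proof -
  let ?E = "\<lambda>j B. measure_pmf.expectation p (\<lambda>x. \<Prod>b\<in>B. x (j b))"
  have "finite B" if "B \<in> \<pi>" for B
    using finite_partition_block[OF P assms(3) that] .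
  then have "(\<Prod>B\<in>\<pi>. measure_pmf.expectation (map_pmf (lin_transform n Q) p)
                      (\<lambda>x. \<Prod>b\<in>B. x (i b))) =
      (\<Prod>B\<in>\<pi>. \<Sum>g\<in>PiE B (\<lambda>_. {1..n}). (\<Prod>b\<in>B. Q (i b) (g b)) * ?E g B)"
    by (intro prod.cong moment_lin_transform[OF fin]) auto
  also have "\<dots> = (\<Sum>j\<in>PiE D (\<lambda>_. {1..n}).
                     \<Prod>B\<in>\<pi>. (\<Prod>b\<in>B. Q (i b) (restrict j B b)) * ?E (restrict j B) B)"
    by (rule prod_sum_over_blocks[OF P assms(3)]) simp
  also have "\<dots> = (\<Sum>j\<in>PiE D (\<lambda>_. {1..n}). \<Prod>B\<in>\<pi>. (\<Prod>b\<in>B. Q (i b) (j b)) * ?E j B)"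
    \<comment> \<open>the factors belonging to block B only see the restriction of j to B\<close>
    by (intro sum.cong refl prod.cong arg_cong2[where f = "(*)"]) auto
  also have "\<dots> = (\<Sum>j\<in>PiE D (\<lambda>_. {1..n}). (\<Prod>B\<in>\<pi>. \<Prod>b\<in>B. Q (i b) (j b)) * (\<Prod>B\<in>\<pi>. ?E j B))"
    by (simp add: prod.distrib)
  also have "\<dots> = (\<Sum>j\<in>PiE D (\<lambda>_. {1..n}). (\<Prod>b\<in>D. Q (i b) (j b)) * (\<Prod>B\<in>\<pi>. ?E j B))"
    by (simp only: prod_over_blocks[OF P assms(3)])
  finally show ?thesis .
qed

theorem proposition5p7:
  fixes p :: "(nat \<Rightarrow> real) pmf" and n m :: nat and Q :: "nat \<Rightarrow> nat \<Rightarrow> real"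
    and L :: "nat \<Rightarrow> nat set set set" and d :: nat and i :: "nat \<Rightarrow> nat"
  assumes "finite (set_pmf p)"
    and "\<And>d'. d' \<ge> 1 \<Longrightarrow> partition_lattice d' (L d')"
    and "d \<ge> 1"
    and "\<forall>b\<in>{1..d}. i b \<in> {1..m}"
  shows "cumulant_tensor L (map_pmf (lin_transform n Q) p) d i =
    (\<Sum>j\<in>PiE {1..d} (\<lambda>_. {1..n}). (\<Prod>b\<in>{1..d}. Q (i b) (j b)) * cumulant_tensor L p d j)"
proof -
  let ?S = "PiE {1..d} (\<lambda>_. {1..n})"
  let ?E = "\<lambda>j B. measure_pmf.expectation p (\<lambda>x. \<Prod>b\<in>B. x (j b))"
  have "partition_on {1..d} \<pi>" if "\<pi> \<in> L d" for \<pi>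
    using assms(2)[OF assms(3)] that
    unfolding partition_lattice_def set_partitions_def by blast
  then have transform: "(\<Prod>B\<in>\<pi>. measure_pmf.expectation (map_pmf (lin_transform n Q) p)
                      (\<lambda>x. \<Prod>b\<in>B. x (i b))) =
      (\<Sum>j\<in>?S. (\<Prod>b\<in>{1..d}. Q (i b) (j b)) * (\<Prod>B\<in>\<pi>. ?E j B))" if "\<pi> \<in> L d" for \<pi>
    using block_moments_lin_transform[OF assms(1)] that by blast
  have "cumulant_tensor L (map_pmf (lin_transform n Q) p) d i =
      (\<Sum>\<pi>\<in>L d. mobius (L d) \<pi> {{1..d}} *
         (\<Sum>j\<in>?S. (\<Prod>b\<in>{1..d}. Q (i b) (j b)) * (\<Prod>B\<in>\<pi>. ?E j B)))"
    unfolding cumulant_tensor_def using transform by (intro sum.cong refl) (simp only:)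
  also have "\<dots> = (\<Sum>j\<in>?S. (\<Prod>b\<in>{1..d}. Q (i b) (j b)) *
      (\<Sum>\<pi>\<in>L d. mobius (L d) \<pi> {{1..d}} * (\<Prod>B\<in>\<pi>. ?E j B)))"
    by (simp add: sum_distrib_left mult_ac sum.swap[of _ "L d"])
  finally show ?thesis unfolding cumulant_tensor_def .
qed

end
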